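(* Let $f:\mathbb{Z}_2^n\to\mathbb{Z}_2$ be a boolean function with EPC distance $d$. Then for all $\mu\in\mathbb{Z}_2^n$, $k\preceq\mu$ and $u\in V_{\bar\mu}$, with $P_{u,k,\mu}=\sum_{x\in k+V_{\bar\mu}}(-1)^{f(x)+u\cdot x}$, $$|P_{u,k,\mu}|^2\le 2^{n-w(\mu)}\left\{\sum_{i=d-w(\mu)}^{n-w(\mu)}\binom{n-w(\mu)}{i}+1\right\},$$ where $\binom{m}{i}=0$ for $i<0$.
   Context: For $x\in\mathbb{Z}_2^n$, $w(x)$ is the Hamming weight; $x\preceq y$ means $x_j\le y_j$ for all $j$; $\bar a$ is the complement of $a$; $V_a=\{x: x\preceq a\}$ and, for $k\preceq\mu$, $k+V_{\bar\mu}=\{k+x: x\preceq\bar\mu\}$; exponents of $(-1)$ are computed mod 2. EPC distance: for $k\preceq\mu$, $v(a,k,\mu)=\sum_{x\in k+V_{\bar\mu}}(-1)^{f(x)+f(x+a)}$. For $l\ge1,q\ge0$, $f$ satisfies EPC($l$) of order $q$ if $v(a,k,\mu)=0$ whenever $k\preceq\mu$, $1\le w(a)\le l$, $0\le w(\mu)\le q$. The EPC distance of $f$ is the largest integer $d\ge1$ such that $f$ satisfies EPC($l$) of order $q$ for all $l\ge1,q\ge0$ with $l+q<d$. *)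

theory Defs
  imports Main
begin

text \<open>Vectors of Z_2^n are modelled as functions nat => bool vanishing outside {0..<n}.\<close>

definition vecs :: "nat \<Rightarrow> (nat \<Rightarrow> bool) set" where
  "vecs n = {x. \<forall>i\<ge>n. \<not> x i}"

definition wt :: "nat \<Rightarrow> (nat \<Rightarrow> bool) \<Rightarrow> nat" where
  "wt n x = card {i. i < n \<and> x i}"

definition prec :: "nat \<Rightarrow> (nat \<Rightarrow> bool) \<Rightarrow> (nat \<Rightarrow> bool) \<Rightarrow> bool" where
  "prec n x y \<longleftrightarrow> (\<forall>i<n. x i \<longrightarrow> y i)"

definition vcompl :: "nat \<Rightarrow> (nat \<Rightarrow> bool) \<Rightarrow> (nat \<Rightarrow> bool)" where
  "vcompl n a = (\<lambda>i. i < n \<and> \<not> a i)"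

definition vadd :: "(nat \<Rightarrow> bool) \<Rightarrow> (nat \<Rightarrow> bool) \<Rightarrow> (nat \<Rightarrow> bool)" where
  "vadd x y = (\<lambda>i. x i \<noteq> y i)"

text \<open>Inner product u . x, as a natural number (only its parity matters).\<close>
definition dotp :: "nat \<Rightarrow> (nat \<Rightarrow> bool) \<Rightarrow> (nat \<Rightarrow> bool) \<Rightarrow> nat" where
  "dotp n u x = card {i. i < n \<and> u i \<and> x i}"

definition bit :: "bool \<Rightarrow> nat" where
  "bit b = (if b then 1 else 0)"

definition Vset :: "nat \<Rightarrow> (nat \<Rightarrow> bool) \<Rightarrow> (nat \<Rightarrow> bool) set" where
  "Vset n a = {x \<in> vecs n. prec n x a}"

definition coset :: "nat \<Rightarrow> (nat \<Rightarrow> bool) \<Rightarrow> (nat \<Rightarrow> bool) \<Rightarrow> (nat \<Rightarrow> bool) set" where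
  "coset n k mu = (\<lambda>x. vadd k x) ` Vset n (vcompl n mu)"

definition epc_v :: "nat \<Rightarrow> ((nat \<Rightarrow> bool) \<Rightarrow> bool) \<Rightarrow> (nat \<Rightarrow> bool) \<Rightarrow> (nat \<Rightarrow> bool) \<Rightarrow> (nat \<Rightarrow> bool) \<Rightarrow> int" where
  "epc_v n f a k mu = (\<Sum>x\<in>coset n k mu. (-1::int) ^ (bit (f x) + bit (f (vadd x a))))"

definition EPC :: "nat \<Rightarrow> ((nat \<Rightarrow> bool) \<Rightarrow> bool) \<Rightarrow> nat \<Rightarrow> nat \<Rightarrow> bool" where
  "EPC n f l q \<longleftrightarrow> (\<forall>a\<in>vecs n. \<forall>k\<in>vecs n. \<forall>mu\<in>vecs n.
      prec n k mu \<and> 1 \<le> wt n a \<and> wt n a \<le> l \<and> wt n mu \<le> q \<longrightarrow> epc_v n f a k mu = 0)"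

definition EPC_upto :: "nat \<Rightarrow> ((nat \<Rightarrow> bool) \<Rightarrow> bool) \<Rightarrow> nat \<Rightarrow> bool" where
  "EPC_upto n f d \<longleftrightarrow> (\<forall>l q. 1 \<le> l \<and> l + q < d \<longrightarrow> EPC n f l q)"

definition has_EPC_distance :: "nat \<Rightarrow> ((nat \<Rightarrow> bool) \<Rightarrow> bool) \<Rightarrow> nat \<Rightarrow> bool" where
  "has_EPC_distance n f d \<longleftrightarrow> 1 \<le> d \<and> EPC_upto n f d \<and> (\<forall>d'. 1 \<le> d' \<and> EPC_upto n f d' \<longrightarrow> d' \<le> d)"

definition Pval :: "nat \<Rightarrow> ((nat \<Rightarrow> bool) \<Rightarrow> bool) \<Rightarrow> (nat \<Rightarrow> bool) \<Rightarrow> (nat \<Rightarrow> bool) \<Rightarrow> (nat \<Rightarrow> bool) \<Rightarrow> int" where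
  "Pval n f u k mu = (\<Sum>x\<in>coset n k mu. (-1::int) ^ (bit (f x) + dotp n u x))"

end

theory Submission
  imports Defs
begin

text \<open>Write \<open>V\<close> for the vectors below the complement of \<open>\<mu>\<close>, so that \<open>P\<close> is a sum over the
  coset \<open>C = k + V\<close>. Squaring \<open>P\<close> and substituting \<open>y = x + a\<close> with \<open>a \<in> V\<close> gives
  \<open>P\<^sup>2 = \<Sum>a\<in>V. (-1)\<^bsup>u\<cdot>a\<^esup> v(a,k,\<mu>)\<close>. Each \<open>|v(a,k,\<mu>)|\<close> is at most \<open>|C| = 2\<^bsup>n-w(\<mu>)\<^esup>\<close>, and by the
  EPC property \<open>v(a,k,\<mu>)\<close> vanishes unless \<open>a = 0\<close> or \<open>w(a) \<ge> d - w(\<mu>)\<close>. Counting the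
  remaining \<open>a\<close> gives the binomial sum.\<close>

lemma vadd_vadd_same [simp]: "vadd x (vadd x y) = y"
  by (auto simp: vadd_def)

lemma inj_vadd: "inj (vadd x)"
  by (metis injI vadd_vadd_same)

lemma vadd_commute: "vadd x y = vadd y x"
  by (auto simp: vadd_def)

lemma vadd_assoc: "vadd (vadd x y) z = vadd x (vadd y z)"
  by (auto simp: vadd_def)

lemma mem_Vset: "a \<in> Vset n b \<longleftrightarrow> (\<forall>i. a i \<longrightarrow> i < n \<and> b i)"
  unfolding Vset_def vecs_def prec_def by (auto; meson not_le)

lemma vadd_mem_Vset: "a \<in> Vset n b \<Longrightarrow> c \<in> Vset n b \<Longrightarrow> vadd a c \<in> Vset n b"
  unfolding mem_Vset vadd_def by auto

lemma mem_coset_iff: "y \<in> coset n k mu \<longleftrightarrow> vadd k y \<in> Vset n (vcompl n mu)"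
  unfolding coset_def by (metis image_iff vadd_vadd_same)

lemma bij_betw_vadd_coset:
  assumes "x \<in> coset n k mu"
  shows "bij_betw (vadd x) (Vset n (vcompl n mu)) (coset n k mu)"
proof -
  have "vadd x ` Vset n (vcompl n mu) = coset n k mu"
  proof
    show "vadd x ` Vset n (vcompl n mu) \<subseteq> coset n k mu"
      using assms by (auto simp: mem_coset_iff vadd_assoc[symmetric] intro: vadd_mem_Vset)
    show "coset n k mu \<subseteq> vadd x ` Vset n (vcompl n mu)"
    proof
      fix y assume "y \<in> coset n k mu"
      with assms have "vadd x y \<in> Vset n (vcompl n mu)"
        using vadd_mem_Vset[of "vadd k x" n _ "vadd k y"]
        by (metis mem_coset_iff vadd_assoc vadd_commute vadd_vadd_same)
      then show "y \<in> vadd x ` Vset n (vcompl n mu)"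
        by (metis image_eqI vadd_vadd_same)
    qed
  qed
  then show ?thesis
    by (simp add: bij_betw_def inj_on_subset[OF inj_vadd])
qed

lemma mem_vecs_less: "a \<in> vecs n \<Longrightarrow> a i \<Longrightarrow> i < n"
  unfolding vecs_def using leI by blast

lemma wt_eq_0_iff: "a \<in> vecs n \<Longrightarrow> wt n a = 0 \<longleftrightarrow> a = (\<lambda>_. False)"
  unfolding wt_def by (auto simp: fun_eq_iff dest: mem_vecs_less)

lemma inj_member_pred: "inj (\<lambda>T i. i \<in> T)"
  by (simp add: inj_on_def fun_eq_iff set_eq_iff)

lemma Vset_eq_image_Pow: "Vset n b = (\<lambda>T i. i \<in> T) ` Pow {i. i < n \<and> b i}"
proof
  show "Vset n b \<subseteq> (\<lambda>T i. i \<in> T) ` Pow {i. i < n \<and> b i}"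
  proof
    fix a assume "a \<in> Vset n b"
    then have "{i. a i} \<in> Pow {i. i < n \<and> b i}" by (auto simp: mem_Vset)
    then show "a \<in> (\<lambda>T i. i \<in> T) ` Pow {i. i < n \<and> b i}"
      by (rule rev_image_eqI) simp
  qed
  show "(\<lambda>T i. i \<in> T) ` Pow {i. i < n \<and> b i} \<subseteq> Vset n b"
    by (auto simp: mem_Vset)
qed

lemma wt_member_pred: "T \<subseteq> {..<n} \<Longrightarrow> wt n (\<lambda>i. i \<in> T) = card T"
  unfolding wt_def by (rule arg_cong[where f = card]) auto

lemma finite_Vset [simp]: "finite (Vset n b)"
  by (simp add: Vset_eq_image_Pow)

lemma card_Vset: "card (Vset n b) = 2 ^ wt n b"
  unfolding Vset_eq_image_Pow
  by (simp add: card_image inj_on_subset[OF inj_member_pred] card_Pow wt_def)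

lemma wt_vcompl: "wt n (vcompl n mu) = n - wt n mu"
proof -
  have "card ({i. i < n \<and> \<not> mu i} \<union> {i. i < n \<and> mu i}) = card {i. i < n \<and> \<not> mu i} + wt n mu"
    unfolding wt_def by (rule card_Un_disjoint) auto
  moreover have "{i. i < n \<and> \<not> mu i} \<union> {i. i < n \<and> mu i} = {..<n}" by auto
  ultimately show ?thesis
    by (simp add: wt_def vcompl_def)
qed

lemma card_coset: "card (coset n k mu) = 2 ^ (n - wt n mu)"
  unfolding coset_def by (simp add: card_image inj_on_subset[OF inj_vadd] card_Vset wt_vcompl)

lemma card_subsets_card_ge:
  assumes "finite S"
  shows "card {T. T \<subseteq> S \<and> L \<le> card T} = (\<Sum>j = L..card S. card S choose j)"
proof -
  have "{T. T \<subseteq> S \<and> L \<le> card T} = (\<Union>j\<in>{L..card S}. {T. T \<subseteq> S \<and> card T = j})"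
    using assms by (auto intro: card_mono)
  also have "card \<dots> = (\<Sum>j = L..card S. card {T. T \<subseteq> S \<and> card T = j})"
    using assms by (intro card_UN_disjoint) auto
  also have "\<dots> = (\<Sum>j = L..card S. card S choose j)"
    using n_subsets[OF assms] by simp
  finally show ?thesis .
qed

lemma card_Vset_wt_ge:
  "card {a \<in> Vset n b. L \<le> wt n a} = (\<Sum>j = L..wt n b. wt n b choose j)"
proof -
  let ?S = "{i. i < n \<and> b i}"
  have "{a \<in> Vset n b. L \<le> wt n a} = (\<lambda>T i. i \<in> T) ` {T. T \<subseteq> ?S \<and> L \<le> card T}"
    unfolding Vset_eq_image_Pow by (auto simp: wt_member_pred subset_eq)
  then have "card {a \<in> Vset n b. L \<le> wt n a} = card {T. T \<subseteq> ?S \<and> L \<le> card T}"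
    by (simp add: card_image inj_on_subset[OF inj_member_pred])
  also have "\<dots> = (\<Sum>j = L..wt n b. wt n b choose j)"
    unfolding wt_def by (rule card_subsets_card_ge) simp
  finally show ?thesis .
qed

lemma card_add_card_eq_card_symdiff:
  assumes "finite A" "finite B"
  shows "card A + card B = card ((A - B) \<union> (B - A)) + 2 * card (A \<inter> B)"
proof -
  have "card (((A - B) \<union> (B - A)) \<union> (A \<inter> B)) = card ((A - B) \<union> (B - A)) + card (A \<inter> B)"
    using assms by (intro card_Un_disjoint) auto
  moreover have "((A - B) \<union> (B - A)) \<union> (A \<inter> B) = A \<union> B" by blast
  ultimately show ?thesis
    using card_Un_Int[OF assms] by simp
qed

lemma minus_one_power_dotp_vadd:
  "(-1::'a::ring_1) ^ dotp n u (vadd x a) = (-1) ^ dotp n u x * (-1) ^ dotp n u a"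
proof -
  define X where "X = {i. i < n \<and> u i \<and> x i}"
  define Y where "Y = {i. i < n \<and> u i \<and> a i}"
  have "{i. i < n \<and> u i \<and> vadd x a i} = (X - Y) \<union> (Y - X)"
    by (auto simp: X_def Y_def vadd_def)
  then have "dotp n u x + dotp n u a = dotp n u (vadd x a) + 2 * card (X \<inter> Y)"
    using card_add_card_eq_card_symdiff[of X Y] by (simp add: dotp_def X_def Y_def)
  then have "(-1::'a) ^ dotp n u x * (-1) ^ dotp n u a = (-1) ^ (dotp n u (vadd x a) + 2 * card (X \<inter> Y))"
    by (simp add: power_add[symmetric])
  then show ?thesis
    by (simp add: power_add power_mult)
qed

lemma Pval_square:
  "(Pval n f u k mu)\<^sup>2 =
     (\<Sum>a\<in>Vset n (vcompl n mu). (-1) ^ dotp n u a * epc_v n f a k mu)"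
proof -
  let ?V = "Vset n (vcompl n mu)" and ?C = "coset n k mu"
  define s where "s x = (-1::int) ^ (bit (f x) + dotp n u x)" for x
  have s_shift: "s x * s (vadd x a) = (-1) ^ dotp n u a * (-1) ^ (bit (f x) + bit (f (vadd x a)))"
    for x a
    by (simp add: s_def power_add minus_one_power_dotp_vadd algebra_simps)
  have "(Pval n f u k mu)\<^sup>2 = (\<Sum>x\<in>?C. \<Sum>y\<in>?C. s x * s y)"
    by (simp add: Pval_def s_def power2_eq_square sum_product)
  also have "\<dots> = (\<Sum>x\<in>?C. \<Sum>a\<in>?V. s x * s (vadd x a))"
    by (intro sum.cong refl sum.reindex_bij_betw[symmetric] bij_betw_vadd_coset)
  also have "\<dots> = (\<Sum>a\<in>?V. \<Sum>x\<in>?C. s x * s (vadd x a))"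
    by (rule sum.swap)
  also have "\<dots> = (\<Sum>a\<in>?V. (-1) ^ dotp n u a * epc_v n f a k mu)"
    by (simp add: s_shift epc_v_def sum_distrib_left)
  finally show ?thesis .
qed

lemma abs_epc_v_le: "\<bar>epc_v n f a k mu\<bar> \<le> 2 ^ (n - wt n mu)"
proof -
  have "\<bar>epc_v n f a k mu\<bar> \<le> (\<Sum>x\<in>coset n k mu. \<bar>(-1::int) ^ (bit (f x) + bit (f (vadd x a)))\<bar>)"
    unfolding epc_v_def by (rule sum_abs)
  then show ?thesis
    by (simp add: card_coset)
qed

lemma Pval_square_le_card_support:
  "\<bar>Pval n f u k mu\<bar>\<^sup>2 \<le>
     2 ^ (n - wt n mu) * int (card {a \<in> Vset n (vcompl n mu). epc_v n f a k mu \<noteq> 0})"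
proof -
  let ?V = "Vset n (vcompl n mu)"
  let ?Z = "{a \<in> ?V. epc_v n f a k mu \<noteq> 0}"
  have "\<bar>Pval n f u k mu\<bar>\<^sup>2 = \<bar>\<Sum>a\<in>?V. (-1) ^ dotp n u a * epc_v n f a k mu\<bar>"
    by (simp flip: Pval_square)
  also have "\<dots> \<le> (\<Sum>a\<in>?V. \<bar>epc_v n f a k mu\<bar>)"
    by (rule order_trans[OF sum_abs]) (simp add: abs_mult)
  also have "\<dots> = (\<Sum>a\<in>?Z. \<bar>epc_v n f a k mu\<bar>)"
    by (rule sum.mono_neutral_right) auto
  also have "\<dots> \<le> (\<Sum>a\<in>?Z. 2 ^ (n - wt n mu))"
    by (rule sum_mono) (rule abs_epc_v_le)
  finally show ?thesis
    by (simp add: mult.commute)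
qed

lemma epc_v_support_subset:
  assumes "EPC_upto n f d" "k \<in> vecs n" "mu \<in> vecs n" "prec n k mu"
  shows "{a \<in> Vset n (vcompl n mu). epc_v n f a k mu \<noteq> 0} \<subseteq>
           {\<lambda>_. False} \<union> {a \<in> Vset n (vcompl n mu). d - wt n mu \<le> wt n a}"
proof
  fix a assume a: "a \<in> {a \<in> Vset n (vcompl n mu). epc_v n f a k mu \<noteq> 0}"
  then have "a \<in> vecs n" by (simp add: Vset_def)
  show "a \<in> {\<lambda>_. False} \<union> {a \<in> Vset n (vcompl n mu). d - wt n mu \<le> wt n a}"
  proof (rule ccontr)
    assume "\<not> ?thesis"
    with a have "1 \<le> wt n a" "wt n a + wt n mu < d"
      using wt_eq_0_iff[OF \<open>a \<in> vecs n\<close>] by auto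
    then have "EPC n f (wt n a) (wt n mu)"
      using assms(1) by (simp add: EPC_upto_def)
    with a \<open>a \<in> vecs n\<close> \<open>1 \<le> wt n a\<close> assms(2-4) show False
      by (auto simp: EPC_def)
  qed
qed

lemma sum_choose_le_int_interval:
  "int (\<Sum>j = nat c..N. N choose j) \<le> (\<Sum>i\<in>{c..int N}. if i < 0 then 0 else int (N choose nat i))"
proof -
  have "int (\<Sum>j = nat c..N. N choose j) = (\<Sum>i\<in>int ` {nat c..N}. if i < 0 then 0 else int (N choose nat i))"
    by (simp add: sum.reindex)
  also have "\<dots> \<le> (\<Sum>i\<in>{c..int N}. if i < 0 then 0 else int (N choose nat i))"
    by (rule sum_mono2) auto
  finally show ?thesis .
qed

theorem mainTheorem4:
  fixes n d :: nat and f :: "(nat \<Rightarrow> bool) \<Rightarrow> bool"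
  assumes "has_EPC_distance n f d"
  shows "\<forall>mu\<in>vecs n. \<forall>k\<in>vecs n. \<forall>u\<in>Vset n (vcompl n mu). prec n k mu \<longrightarrow>
    \<bar>Pval n f u k mu\<bar> ^ 2 \<le>
      2 ^ (n - wt n mu) *
      ((\<Sum>i\<in>{int d - int (wt n mu) .. int (n - wt n mu)}.
          if i < 0 then 0 else int ((n - wt n mu) choose nat i)) + 1)"
proof (intro ballI impI)
  fix mu k u
  assume "mu \<in> vecs n" "k \<in> vecs n" "prec n k mu"
  let ?V = "Vset n (vcompl n mu)" and ?N = "n - wt n mu"
  have "EPC_upto n f d"
    using assms by (simp add: has_EPC_distance_def)
  then have "card {a \<in> ?V. epc_v n f a k mu \<noteq> 0} \<le> card ({\<lambda>_. False} \<union> {a \<in> ?V. d - wt n mu \<le> wt n a})"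
    using epc_v_support_subset \<open>mu \<in> vecs n\<close> \<open>k \<in> vecs n\<close> \<open>prec n k mu\<close>
    by (intro card_mono) auto
  also have "\<dots> \<le> 1 + (\<Sum>j = d - wt n mu..?N. ?N choose j)"
    by (rule order_trans[OF card_Un_le]) (simp add: card_Vset_wt_ge wt_vcompl)
  also have "\<dots> = 1 + (\<Sum>j = nat (int d - int (wt n mu))..?N. ?N choose j)"
    by (simp only: nat_minus_as_int)
  finally have "int (card {a \<in> ?V. epc_v n f a k mu \<noteq> 0}) \<le>
      (\<Sum>i\<in>{int d - int (wt n mu) .. int ?N}. if i < 0 then 0 else int (?N choose nat i)) + 1"
    using sum_choose_le_int_interval[where c = "int d - int (wt n mu)" and N = ?N] by linarith
  from order_trans[OF Pval_square_le_card_support mult_left_mono, OF this]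
  show "\<bar>Pval n f u k mu\<bar> ^ 2 \<le> 2 ^ ?N *
      ((\<Sum>i\<in>{int d - int (wt n mu) .. int ?N}. if i < 0 then 0 else int (?N choose nat i)) + 1)"
    by simp
qed

end
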